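(* Assume $\mu$ is such that $\overline N=\sum_{N\ge0}N\lambda_{N,\mu}\in\mathbb{N}$. Then $$F(\overline N)\ge F_{\mathrm{gc}}(\mu)\ge F(\overline N)-\ln(1+\overline N)-1.$$
   Context: Fix a nondecreasing sequence $(E_j)_{j\ge0}$ of nonnegative reals. A configuration is a sequence $n=(n_0,n_1,\dots)$ of nonnegative integers with finitely many nonzero entries; $|n|=\sum_jn_j$ and $E(n)=\sum_jE_jn_j$. The canonical partition function is $Z(N)=\sum_{|n|=N}e^{-E(n)}$ and the canonical free energy is $F(N)=-\ln Z(N)$. The grand canonical partition function is $Z_{\mathrm{gc}}(\mu)=\sum_ne^{-(E(n)-\mu|n|)}$ (assumed finite, as are all $Z(N)$), $\lambda_{N,\mu}=Z(N)e^{\mu N}/Z_{\mathrm{gc}}(\mu)$, and the grand canonical free energy is $F_{\mathrm{gc}}(\mu)=\sum_{N\ge0}\lambda_{N,\mu}F(N)-S(\lambda)$ with $S(\lambda)=-\sum_{N\ge0}\lambda_{N,\mu}\ln\lambda_{N,\mu}$. *)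

theory Defs
  imports "HOL-Analysis.Analysis"
begin

text \<open>Configurations: finitely supported occupation sequences.\<close>
definition configs :: "(nat \<Rightarrow> nat) set" where
  "configs = {n. finite {j. n j \<noteq> 0}}"

definition cnum :: "(nat \<Rightarrow> nat) \<Rightarrow> nat" where
  "cnum n = (\<Sum>j\<in>{j. n j \<noteq> 0}. n j)"

definition cenergy :: "(nat \<Rightarrow> real) \<Rightarrow> (nat \<Rightarrow> nat) \<Rightarrow> real" where
  "cenergy E n = (\<Sum>j\<in>{j. n j \<noteq> 0}. E j * real (n j))"

definition Zc :: "(nat \<Rightarrow> real) \<Rightarrow> nat \<Rightarrow> real" where
  "Zc E N = infsum (\<lambda>n. exp (- cenergy E n)) {n \<in> configs. cnum n = N}"

definition Fc :: "(nat \<Rightarrow> real) \<Rightarrow> nat \<Rightarrow> real" where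
  "Fc E N = - ln (Zc E N)"

definition Zgc :: "(nat \<Rightarrow> real) \<Rightarrow> real \<Rightarrow> real" where
  "Zgc E \<mu> = infsum (\<lambda>n. exp (- (cenergy E n - \<mu> * real (cnum n)))) configs"

definition lam :: "(nat \<Rightarrow> real) \<Rightarrow> real \<Rightarrow> nat \<Rightarrow> real" where
  "lam E \<mu> N = Zc E N * exp (\<mu> * real N) / Zgc E \<mu>"

definition entropy :: "(nat \<Rightarrow> real) \<Rightarrow> real \<Rightarrow> real" where
  "entropy E \<mu> = - (\<Sum>N. lam E \<mu> N * ln (lam E \<mu> N))"

definition Fgc :: "(nat \<Rightarrow> real) \<Rightarrow> real \<Rightarrow> real" where
  "Fgc E \<mu> = (\<Sum>N. lam E \<mu> N * Fc E N) - entropy E \<mu>"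

end

theory Submission
  imports Defs
begin

text \<open>The canonical partition function \<open>Z(N)\<close> is the complete homogeneous symmetric
polynomial of degree \<open>N\<close> in the weights \<open>exp (- E j)\<close>. Truncating to finitely many modes, adding
a mode convolves the sequence with a geometric sequence, which preserves log-concavity; in the
limit \<open>Z\<close> is log-concave, i.e. \<open>F\<close> is convex in \<open>N\<close>. Since \<open>F_gc(\<mu>) = \<mu> Nb - ln Z_gc(\<mu>)\<close>, one has
\<open>F(Nb) - F_gc(\<mu>) = - ln \<lambda>\<^bsub>Nb\<^esub> \<ge> 0\<close>, the upper bound. By Jensen's inequality for the convex \<open>F\<close> (through its supporting
line at the mean \<open>Nb\<close>), \<open>\<Sum> \<lambda>\<^sub>N F(N) \<ge> F(Nb)\<close>, so \<open>F_gc \<ge> F(Nb) - S(\<lambda>)\<close>; finally Gibbs' inequality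
against the geometric distribution with mean \<open>Nb\<close> bounds the entropy by \<open>ln (1 + Nb) + 1\<close>.\<close>

lemma cnum_eq_sum: "finite S \<Longrightarrow> {j. n j \<noteq> 0} \<subseteq> S \<Longrightarrow> cnum n = sum n S"
  unfolding cnum_def by (rule sum.mono_neutral_left) auto

lemma cenergy_eq_sum:
  "finite S \<Longrightarrow> {j. n j \<noteq> 0} \<subseteq> S \<Longrightarrow> cenergy E n = (\<Sum>j\<in>S. E j * real (n j))"
  unfolding cenergy_def by (rule sum.mono_neutral_left) auto

definition configs_of_size :: "nat \<Rightarrow> (nat \<Rightarrow> nat) set" where
  "configs_of_size N = {n \<in> configs. cnum n = N}"

definition configs_below :: "nat \<Rightarrow> nat \<Rightarrow> (nat \<Rightarrow> nat) set" where
  "configs_below J N = {n. (\<forall>j\<ge>J. n j = 0) \<and> sum n {..<J} = N}"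

definition Zc_below :: "(nat \<Rightarrow> real) \<Rightarrow> nat \<Rightarrow> nat \<Rightarrow> real" where
  "Zc_below E J N = (\<Sum>n\<in>configs_below J N. exp (- cenergy E n))"

lemma configs_below_support: "n \<in> configs_below J N \<Longrightarrow> {j. n j \<noteq> 0} \<subseteq> {..<J}"
  unfolding configs_below_def by (auto simp: not_less[symmetric])

lemma configs_below_subset: "configs_below J N \<subseteq> configs_of_size N"
proof
  fix n assume n: "n \<in> configs_below J N"
  have "finite {j. n j \<noteq> 0}"
    using configs_below_support[OF n] finite_subset by blast
  moreover have "cnum n = N"
    using cnum_eq_sum[OF _ configs_below_support[OF n]] n by (simp add: configs_below_def)
  ultimately show "n \<in> configs_of_size N"
    by (simp add: configs_of_size_def configs_def)
qed

lemma configs_below_0: "configs_below 0 N = (if N = 0 then {\<lambda>_. 0} else {})"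
  unfolding configs_below_def by auto

lemma configs_below_Suc:
  "configs_below (Suc J) N = (\<Union>k\<in>{..N}. (\<lambda>m. m(J:=k)) ` configs_below J (N - k))"
proof (intro equalityI subsetI)
  fix n assume n: "n \<in> configs_below (Suc J) N"
  let ?m = "n(J:=0)"
  have total: "sum n {..<Suc J} = N"
    using n by (simp add: configs_below_def)
  have "sum ?m {..<J} = sum n {..<J}"
    by (rule sum.cong) auto
  with n total have "?m \<in> configs_below J (N - n J)"
    by (auto simp: configs_below_def)
  moreover have "n J \<le> N" and "n = ?m(J := n J)"
    using total by auto
  ultimately show "n \<in> (\<Union>k\<in>{..N}. (\<lambda>m. m(J:=k)) ` configs_below J (N - k))"
    by blast
next
  fix n assume "n \<in> (\<Union>k\<in>{..N}. (\<lambda>m. m(J:=k)) ` configs_below J (N - k))"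
  then obtain k m where k: "k \<le> N" and m: "m \<in> configs_below J (N - k)" and n: "n = m(J:=k)"
    by auto
  have "sum n {..<J} = sum m {..<J}"
    unfolding n by (rule sum.cong) auto
  with k m n show "n \<in> configs_below (Suc J) N"
    by (auto simp: configs_below_def)
qed

lemma finite_configs_below: "finite (configs_below J N)"
  by (induction J arbitrary: N) (simp_all add: configs_below_0 configs_below_Suc)

lemma cenergy_fun_upd_configs_below:
  assumes "m \<in> configs_below J N"
  shows "cenergy E (m(J:=k)) = cenergy E m + E J * real k"
proof -
  have "{j. (m(J:=k)) j \<noteq> 0} \<subseteq> {..<Suc J}"
    using configs_below_support[OF assms] by auto
  then have "cenergy E (m(J:=k)) = (\<Sum>j<Suc J. E j * real ((m(J:=k)) j))"
    by (intro cenergy_eq_sum) simp_all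
  also have "\<dots> = (\<Sum>j<J. E j * real (m j)) + E J * real k"
    by (auto intro: sum.cong)
  also have "(\<Sum>j<J. E j * real (m j)) = cenergy E m"
    by (rule cenergy_eq_sum[OF _ configs_below_support[OF assms], symmetric]) simp
  finally show ?thesis .
qed

lemma Zc_below_0: "Zc_below E 0 N = (if N = 0 then 1 else 0)"
  by (simp add: Zc_below_def configs_below_0 cenergy_def)

lemma Zc_below_Suc: "Zc_below E (Suc J) N = (\<Sum>k\<le>N. exp (- E J) ^ k * Zc_below E J (N - k))"
proof -
  let ?upd = "\<lambda>k m. m(J:=k)"
  have "Zc_below E (Suc J) N = (\<Sum>k\<le>N. \<Sum>n\<in>?upd k ` configs_below J (N - k). exp (- cenergy E n))"
    unfolding Zc_below_def configs_below_Suc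
    by (rule sum.UNION_disjoint) (auto simp: finite_configs_below dest: fun_cong[where x = J])
  also have "\<dots> = (\<Sum>k\<le>N. exp (- E J) ^ k * Zc_below E J (N - k))"
  proof (rule sum.cong[OF refl])
    fix k
    have "inj_on (?upd k) (configs_below J (N - k))"
    proof (rule inj_onI, rule ext)
      fix a b j
      assume "a \<in> configs_below J (N - k)" "b \<in> configs_below J (N - k)" "a(J:=k) = b(J:=k)"
      then show "a j = b j"
        by (cases "j = J") (auto simp: configs_below_def dest: fun_cong[where x = j])
    qed
    then have "(\<Sum>n\<in>?upd k ` configs_below J (N - k). exp (- cenergy E n))
        = (\<Sum>m\<in>configs_below J (N - k). exp (- cenergy E (m(J:=k))))"
      by (simp add: sum.reindex)
    also have "\<dots> = (\<Sum>m\<in>configs_below J (N - k). exp (- E J) ^ k * exp (- cenergy E m))"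
    proof (rule sum.cong[OF refl])
      fix m assume "m \<in> configs_below J (N - k)"
      then have "exp (- cenergy E (m(J:=k))) = exp (real k * (- E J)) * exp (- cenergy E m)"
        by (simp add: cenergy_fun_upd_configs_below exp_add[symmetric] algebra_simps)
      then show "exp (- cenergy E (m(J:=k))) = exp (- E J) ^ k * exp (- cenergy E m)"
        by (simp only: exp_of_nat_mult)
    qed
    finally show "(\<Sum>n\<in>?upd k ` configs_below J (N - k). exp (- cenergy E n))
        = exp (- E J) ^ k * Zc_below E J (N - k)"
      by (simp add: Zc_below_def sum_distrib_left)
  qed
  finally show ?thesis .
qed

definition log_concave :: "(nat \<Rightarrow> real) \<Rightarrow> bool" where
  "log_concave a \<longleftrightarrow> (\<forall>n. a n * a (n + 2) \<le> a (n + 1)^2)"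

lemma log_concave_ratio_antimono:
  assumes pos: "\<And>n. a n > 0" and "log_concave a" and "i \<le> j"
  shows "a i * a (j + 1) \<le> a (i + 1) * a j"
proof -
  have "decseq (\<lambda>n. a (Suc n) / a n)"
  proof (rule decseq_SucI)
    fix n
    have "a n * a (n + 2) \<le> a (n + 1) * a (n + 1)"
      using \<open>log_concave a\<close> by (simp add: log_concave_def power2_eq_square)
    then show "a (Suc (Suc n)) / a (Suc n) \<le> a (Suc n) / a n"
      using pos[of n] pos[of "Suc n"] by (simp add: divide_simps mult.commute)
  qed
  then have "a (j + 1) / a j \<le> a (i + 1) / a i"
    using \<open>i \<le> j\<close> by (simp add: decseq_def)
  then show ?thesis
    using pos[of i] pos[of j] by (simp add: divide_simps mult.commute)
qed

lemma log_concave_geometric_convolution: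
  fixes a :: "nat \<Rightarrow> real"
  assumes pos: "\<And>n. a n > 0" and lc: "log_concave a" and x: "x > 0"
  shows "log_concave (\<lambda>N. \<Sum>k\<le>N. x^k * a (N - k))"
proof -
  define b where "b N = (\<Sum>k\<le>N. x^k * a (N - k))" for N
  have rec: "b (Suc N) = a (Suc N) + x * b N" for N
    unfolding b_def sum.atMost_Suc_shift by (simp add: sum_distrib_left mult.assoc)
  \<comment> \<open>By the recursion the claim reduces to \<open>b N * a (N + 2) \<le> b (N + 1) * a (N + 1)\<close>, which
    holds termwise because the ratios \<open>a (n + 1) / a n\<close> decrease.\<close>
  have "b N * b (N + 2) \<le> b (N + 1)^2" for N
  proof -
    have "b N * a (N + 2) = (\<Sum>k\<le>N. x^k * (a (N - k) * a (N + 2)))"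
      unfolding b_def sum_distrib_right by (simp add: mult.assoc)
    also have "\<dots> \<le> (\<Sum>k\<le>N. x^k * (a (N + 1 - k) * a (N + 1)))"
    proof (rule sum_mono)
      fix k assume "k \<in> {..N}"
      then have "a (N - k) * a (N + 1 + 1) \<le> a (N - k + 1) * a (N + 1)"
        by (intro log_concave_ratio_antimono[OF pos lc]) auto
      moreover have "N - k + 1 = N + 1 - k"
        using \<open>k \<in> {..N}\<close> by auto
      ultimately show "x^k * (a (N - k) * a (N + 2)) \<le> x^k * (a (N + 1 - k) * a (N + 1))"
        using x by (intro mult_left_mono) auto
    qed
    also have "\<dots> \<le> (\<Sum>k\<le>Suc N. x^k * (a (N + 1 - k) * a (N + 1)))"
      using x pos[of 0] pos[of "Suc N"] by (simp add: sum.atMost_Suc less_imp_le)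
    also have "\<dots> = b (N + 1) * a (N + 1)"
      unfolding b_def sum_distrib_right by (simp add: mult.assoc)
    finally have "b N * a (N + 2) \<le> b (N + 1) * a (N + 1)" .
    moreover have "b N * b (N + 2) = b N * a (N + 2) + x * (b N * b (N + 1))"
      using rec[of "N + 1"] by (simp add: algebra_simps)
    moreover have "b (N + 1)^2 = b (N + 1) * a (N + 1) + x * (b N * b (N + 1))"
      using rec[of N] by (simp add: power2_eq_square algebra_simps)
    ultimately show ?thesis
      by linarith
  qed
  then show ?thesis
    by (simp add: log_concave_def b_def)
qed

lemma Zc_below_pos_log_concave:
  "(\<forall>N. Zc_below E (Suc J) N > 0) \<and> log_concave (Zc_below E (Suc J))"
proof (induction J)
  case 0
  have "Zc_below E (Suc 0) N = exp (- E 0) ^ N" for N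
    unfolding Zc_below_Suc Zc_below_0 by (simp add: if_distrib cong: if_cong)
  then show ?case
    by (simp add: log_concave_def power2_eq_square power_add)
next
  case (Suc J)
  have "Zc_below E (Suc (Suc J)) = (\<lambda>N. \<Sum>k\<le>N. exp (- E (Suc J))^k * Zc_below E (Suc J) (N - k))"
    by (rule ext) (rule Zc_below_Suc)
  with Suc show ?case
    using log_concave_geometric_convolution[of "Zc_below E (Suc J)" "exp (- E (Suc J))"]
    by (auto intro!: sum_pos)
qed

lemma Zc_below_le_Zc:
  assumes "(\<lambda>n. exp (- cenergy E n)) summable_on configs_of_size N"
  shows "Zc_below E J N \<le> Zc E N"
proof -
  have "((\<lambda>n. exp (- cenergy E n)) has_sum Zc_below E J N) (configs_below J N)"
    unfolding Zc_below_def by (rule has_sum_finite[OF finite_configs_below])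
  moreover have "((\<lambda>n. exp (- cenergy E n)) has_sum Zc E N) (configs_of_size N)"
    using assms by (simp add: Zc_def configs_of_size_def)
  ultimately show ?thesis
    by (rule has_sum_mono_neutral) (use configs_below_subset in auto)
qed

lemma finite_subset_configs_below:
  assumes "finite F" and "F \<subseteq> configs_of_size N"
  obtains J0 where "\<And>J. J \<ge> J0 \<Longrightarrow> F \<subseteq> configs_below J N"
proof
  define modes where "modes = (\<Union>n\<in>F. {j. n j \<noteq> 0})"
  have "finite modes"
    using assms by (auto simp: modes_def configs_of_size_def configs_def)
  fix J assume J: "J \<ge> Suc (Max modes)"
  show "F \<subseteq> configs_below J N"
  proof
    fix n assume n: "n \<in> F"
    have support: "{j. n j \<noteq> 0} \<subseteq> {..<J}"
    proof
      fix j assume "j \<in> {j. n j \<noteq> 0}"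
      then have "j \<in> modes"
        using n by (auto simp: modes_def)
      then show "j \<in> {..<J}"
        using J Max_ge[OF \<open>finite modes\<close>] by (meson Suc_le_lessD le_less_trans lessThan_iff)
    qed
    have "cnum n = N"
      using n assms(2) by (simp add: configs_of_size_def subset_iff)
    then have "sum n {..<J} = N"
      using cnum_eq_sum[OF _ support] by simp
    moreover have "\<forall>j\<ge>J. n j = 0"
      using support by (auto simp: subset_iff)
    ultimately show "n \<in> configs_below J N"
      by (simp add: configs_below_def)
  qed
qed

lemma Zc_below_tendsto_Zc:
  assumes summable: "(\<lambda>n. exp (- cenergy E n)) summable_on configs_of_size N"
  shows "(\<lambda>J. Zc_below E J N) \<longlonglongrightarrow> Zc E N"
proof (rule LIMSEQ_I)
  fix r :: real assume r: "r > 0"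
  let ?f = "\<lambda>n. exp (- cenergy E n)"
  have "(?f has_sum Zc E N) (configs_of_size N)"
    using summable by (simp add: Zc_def configs_of_size_def)
  from has_sum_finite_approximation[OF this, of "r/2"] r
  obtain F where F: "finite F" "F \<subseteq> configs_of_size N" "dist (sum ?f F) (Zc E N) \<le> r/2"
    by auto
  obtain J0 where J0: "\<And>J. J \<ge> J0 \<Longrightarrow> F \<subseteq> configs_below J N"
    using finite_subset_configs_below[OF F(1,2)] by blast
  have below: "sum ?f F \<le> Zc_below E J N" if "J \<ge> J0" for J
    unfolding Zc_below_def using J0[OF that] by (intro sum_mono2[OF finite_configs_below]) auto
  have "norm (Zc_below E J N - Zc E N) < r" if "J \<ge> J0" for J
    using below[OF that] F(3) r Zc_below_le_Zc[OF summable, of J] by (simp add: dist_real_def)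
  then show "\<exists>J0. \<forall>J\<ge>J0. norm (Zc_below E J N - Zc E N) < r"
    by blast
qed

lemma Zc_pos:
  assumes "(\<lambda>n. exp (- cenergy E n)) summable_on configs_of_size N"
  shows "Zc E N > 0"
  using Zc_below_pos_log_concave[of E 0] Zc_below_le_Zc[OF assms, of "Suc 0"]
  by (meson less_le_trans)

lemma Zc_log_concave:
  assumes "\<And>N. (\<lambda>n. exp (- cenergy E n)) summable_on configs_of_size N"
  shows "log_concave (Zc E)"
  unfolding log_concave_def
proof
  fix n
  have lim: "(\<lambda>J. Zc_below E (Suc J) N) \<longlonglongrightarrow> Zc E N" for N
    using LIMSEQ_Suc[OF Zc_below_tendsto_Zc[OF assms]] .
  show "Zc E n * Zc E (n + 2) \<le> Zc E (n + 1)^2"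
    using Zc_below_pos_log_concave[of E] unfolding log_concave_def
    by (intro LIMSEQ_le[OF tendsto_mult[OF lim lim] tendsto_power[OF lim]]) blast
qed

lemma Fc_increments_incseq:
  assumes "\<And>N. (\<lambda>n. exp (- cenergy E n)) summable_on configs_of_size N"
  shows "incseq (\<lambda>k. Fc E (Suc k) - Fc E k)"
proof (rule incseq_SucI)
  fix k
  have pos: "Zc E N > 0" for N
    by (rule Zc_pos[OF assms])
  have "ln (Zc E k * Zc E (k + 2)) \<le> ln (Zc E (k + 1)^2)"
    using Zc_log_concave[OF assms] pos[of k] pos[of "k + 2"]
    by (intro ln_mono) (auto simp: log_concave_def)
  then have "ln (Zc E k) + ln (Zc E (k + 2)) \<le> 2 * ln (Zc E (k + 1))"
    using pos[of k] pos[of "k + 1"] pos[of "k + 2"] by (simp add: ln_mult ln_realpow)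
  then show "Fc E (Suc k) - Fc E k \<le> Fc E (Suc (Suc k)) - Fc E (Suc k)"
    by (simp add: Fc_def)
qed

lemma term_le_sums:
  fixes f :: "nat \<Rightarrow> real"
  assumes "\<And>n. 0 \<le> f n" and "f sums s"
  shows "f n \<le> s"
  using sum_le_suminf[of f "{n}"] assms by (auto simp: sums_iff)

lemma convex_seq_supporting_line:
  fixes F :: "nat \<Rightarrow> real"
  assumes convex: "incseq (\<lambda>k. F (Suc k) - F k)"
  shows "F m + (F (Suc m) - F m) * (real n - real m) \<le> F n"
proof (cases "m \<le> n")
  case True
  have "real (card {m..<n}) * (F (Suc m) - F m) \<le> (\<Sum>k=m..<n. F (Suc k) - F k)"
    using convex by (intro sum_bounded_below) (simp add: incseq_def)
  also have "\<dots> = F n - F m"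
    using True by (rule sum_Suc_diff')
  finally show ?thesis
    using True by (simp add: of_nat_diff algebra_simps)
next
  case False
  have "F m - F n = (\<Sum>k=n..<m. F (Suc k) - F k)"
    using False by (simp add: sum_Suc_diff')
  also have "\<dots> \<le> real (card {n..<m}) * (F (Suc m) - F m)"
    using convex by (intro sum_bounded_above) (simp add: incseq_def)
  finally show ?thesis
    using False by (simp add: of_nat_diff algebra_simps)
qed

lemma convex_seq_le_expectation:
  fixes F p :: "nat \<Rightarrow> real"
  assumes convex: "incseq (\<lambda>k. F (Suc k) - F k)" and nonneg: "\<And>N. 0 \<le> p N"
    and total: "p sums 1" and mean: "(\<lambda>N. real N * p N) sums real m"
    and expectation: "(\<lambda>N. p N * F N) sums s"
  shows "F m \<le> s"
proof -
  define c where "c = F (Suc m) - F m"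
  have "(\<lambda>N. F m * p N + c * (real N * p N) - c * real m * p N)
      sums (F m * 1 + c * real m - c * real m * 1)"
    by (intro sums_diff sums_add sums_mult total mean)
  moreover have "F m * p N + c * (real N * p N) - c * real m * p N \<le> p N * F N" for N
    using mult_left_mono[OF convex_seq_supporting_line[OF convex, of m N] nonneg[of N]]
    by (simp add: c_def algebra_simps)
  ultimately show ?thesis
    using sums_le[OF _ _ expectation] by fastforce
qed

lemma neg_mult_ln_le:
  fixes p g :: real
  assumes "0 < p" and "0 < g"
  shows "- (p * ln p) \<le> g - p - p * ln g"
proof -
  have "ln (g / p) \<le> g / p - 1"
    using assms by (intro ln_le_minus_one) auto
  then have "p * ln (g / p) \<le> g - p"
    using assms by (simp add: field_simps)
  then show ?thesis
    using assms by (simp add: ln_divide_pos algebra_simps)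
qed

lemma mult_ln_one_plus_inverse_le:
  fixes m :: real
  assumes "0 < m"
  shows "m * ln ((m + 1) / m) \<le> 1"
proof -
  have "ln ((m + 1) / m) \<le> (m + 1) / m - 1"
    using assms by (intro ln_le_minus_one) auto
  then show ?thesis
    using assms by (simp add: field_simps)
qed

lemma entropy_le_ln_mean:
  fixes p :: "nat \<Rightarrow> real"
  assumes pos: "\<And>N. 0 < p N" and total: "p sums 1" and mean: "(\<lambda>N. real N * p N) sums m"
  shows "summable (\<lambda>N. p N * ln (p N))" and "- (\<Sum>N. p N * ln (p N)) \<le> ln (1 + m) + 1"
proof -
  have "p 1 \<le> m"
    using term_le_sums[OF _ mean, of 1] pos by (simp add: less_imp_le)
  with pos[of 1] have "m > 0"
    by linarith
  \<comment> \<open>Compare with the geometric distribution \<open>g\<close> of mean \<open>m\<close>.\<close>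
  define q where "q = m / (m + 1)"
  have q: "0 < q" "q < 1"
    using \<open>m > 0\<close> by (auto simp: q_def)
  define g where "g N = q ^ N / (m + 1)" for N
  have "(\<lambda>N. q ^ N) sums (m + 1)"
    using geometric_sums[of q] q \<open>m > 0\<close> by (simp add: q_def field_simps)
  then have g_total: "g sums 1"
    using sums_divide[of _ "m + 1" "m + 1"] \<open>m > 0\<close> unfolding g_def by fastforce
  have ln_g: "ln (g N) = real N * ln q - ln (m + 1)" for N
    using q \<open>m > 0\<close> by (simp add: g_def ln_divide_pos ln_realpow)
  define bound where "bound N = g N - p N - p N * ln (g N)" for N
  have "bound = (\<lambda>N. g N - p N - (ln q * (real N * p N) - ln (m + 1) * p N))"
    by (auto simp: bound_def ln_g algebra_simps)
  moreover have "(\<lambda>N. g N - p N - (ln q * (real N * p N) - ln (m + 1) * p N))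
      sums (1 - 1 - (ln q * m - ln (m + 1) * 1))"
    by (intro sums_diff sums_mult g_total total mean)
  ultimately have bound_sums: "bound sums (ln (m + 1) - ln q * m)"
    by simp
  have gibbs: "- (p N * ln (p N)) \<le> bound N" for N
    unfolding bound_def using pos q \<open>m > 0\<close> by (intro neg_mult_ln_le) (simp_all add: g_def)
  have "p N \<le> 1" for N
    using term_le_sums[OF _ total] pos by (simp add: less_imp_le)
  then have "0 \<le> - (p N * ln (p N))" for N
    using pos[of N] by (simp add: mult_le_0_iff)
  then have summable: "summable (\<lambda>N. - (p N * ln (p N)))"
    using gibbs by (intro summable_comparison_test'[OF sums_summable[OF bound_sums]]) auto
  then show summable_plnp: "summable (\<lambda>N. p N * ln (p N))"
    using summable_minus by fastforce
  have "- (\<Sum>N. p N * ln (p N)) \<le> ln (m + 1) - ln q * m"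
    using sums_le[OF gibbs summable_sums[OF summable] bound_sums] suminf_minus[OF summable_plnp]
    by simp
  moreover have "- ln q * m \<le> 1"
    using mult_ln_one_plus_inverse_le[OF \<open>m > 0\<close>] \<open>m > 0\<close>
    by (simp add: q_def ln_divide_pos algebra_simps)
  ultimately show "- (\<Sum>N. p N * ln (p N)) \<le> ln (1 + m) + 1"
    by (simp add: add.commute)
qed

context
  fixes E :: "nat \<Rightarrow> real" and \<mu> :: real
  assumes Zc_summable: "\<And>N. (\<lambda>n. exp (- cenergy E n)) summable_on configs_of_size N"
    and Zgc_summable: "(\<lambda>n. exp (- (cenergy E n - \<mu> * real (cnum n)))) summable_on configs"
begin

lemma Zgc_sums: "(\<lambda>N. Zc E N * exp (\<mu> * real N)) sums Zgc E \<mu>"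
proof -
  let ?g = "\<lambda>n. exp (- (cenergy E n - \<mu> * real (cnum n)))"
  have "configs = snd ` Sigma UNIV configs_of_size"
    by (force simp: configs_of_size_def)
  moreover have "inj_on snd (Sigma UNIV configs_of_size)"
    by (rule inj_onI) (auto simp: configs_of_size_def)
  ultimately have "((?g \<circ> snd) has_sum Zgc E \<mu>) (Sigma UNIV configs_of_size)"
    using Zgc_summable by (simp add: Zgc_def flip: has_sum_reindex)
  then have "((\<lambda>N. Zc E N * exp (\<mu> * real N)) has_sum Zgc E \<mu>) UNIV"
  proof (rule has_sum_SigmaD)
    fix N :: nat
    have "((\<lambda>n. exp (- cenergy E n) * exp (\<mu> * real N)) has_sum Zc E N * exp (\<mu> * real N))
        (configs_of_size N)"
      using Zc_summable[of N] by (intro has_sum_cmult_left) (simp add: Zc_def configs_of_size_def)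
    then show "((\<lambda>n. (?g \<circ> snd) (N, n)) has_sum Zc E N * exp (\<mu> * real N)) (configs_of_size N)"
      by (rule has_sum_cong[THEN iffD1, rotated])
        (simp add: configs_of_size_def exp_add[symmetric] algebra_simps)
  qed
  then show ?thesis
    by (rule has_sum_imp_sums)
qed

lemma Zgc_pos: "Zgc E \<mu> > 0"
proof -
  have "0 < (\<Sum>N. Zc E N * exp (\<mu> * real N))"
    using Zgc_sums Zc_pos[OF Zc_summable] by (intro suminf_pos) (auto simp: sums_iff)
  then show ?thesis
    using Zgc_sums by (simp add: sums_iff)
qed

lemma lam_pos: "lam E \<mu> N > 0"
  using Zc_pos[OF Zc_summable] Zgc_pos by (simp add: lam_def)

lemma lam_sums_one: "lam E \<mu> sums 1"
  using sums_divide[OF Zgc_sums, of "Zgc E \<mu>"] Zgc_pos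
  by (simp add: lam_def[abs_def])

lemma ln_lam: "ln (lam E \<mu> N) = \<mu> * real N - ln (Zgc E \<mu>) - Fc E N"
  using Zc_pos[OF Zc_summable, of N] Zgc_pos
  by (simp add: lam_def Fc_def ln_div ln_mult)

lemma lam_Fc_sums:
  assumes mean: "(\<lambda>N. real N * lam E \<mu> N) sums m"
  shows "(\<lambda>N. lam E \<mu> N * Fc E N) sums (\<mu> * m - ln (Zgc E \<mu>) + entropy E \<mu>)"
proof -
  let ?L = "lam E \<mu>"
  have "summable (\<lambda>N. ?L N * ln (?L N))"
    by (rule entropy_le_ln_mean(1)[OF lam_pos lam_sums_one mean])
  then have "(\<lambda>N. \<mu> * (real N * ?L N) - ln (Zgc E \<mu>) * ?L N - ?L N * ln (?L N))
      sums (\<mu> * m - ln (Zgc E \<mu>) * 1 - (\<Sum>N. ?L N * ln (?L N)))"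
    by (intro sums_diff sums_mult mean lam_sums_one summable_sums)
  moreover have "\<mu> * (real N * ?L N) - ln (Zgc E \<mu>) * ?L N - ?L N * ln (?L N) = ?L N * Fc E N" for N
    by (simp add: ln_lam algebra_simps)
  ultimately show ?thesis
    by (simp add: entropy_def)
qed

lemma Fgc_eq:
  assumes "(\<lambda>N. real N * lam E \<mu> N) sums m"
  shows "Fgc E \<mu> = \<mu> * m - ln (Zgc E \<mu>)"
  using lam_Fc_sums[OF assms] by (simp add: Fgc_def sums_iff)

end

theorem corollaryA2:
  fixes E :: "nat \<Rightarrow> real" and \<mu> :: real and Nb :: nat
  assumes "mono E" and "\<And>j. 0 \<le> E j"
    and "\<And>N. (\<lambda>n. exp (- cenergy E n)) summable_on {n \<in> configs. cnum n = N}"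
    and "(\<lambda>n. exp (- (cenergy E n - \<mu> * real (cnum n)))) summable_on configs"
    and "(\<lambda>N. real N * lam E \<mu> N) sums (real Nb)"
  shows "Fc E Nb \<ge> Fgc E \<mu> \<and> Fgc E \<mu> \<ge> Fc E Nb - ln (1 + real Nb) - 1"
proof -
  have Zc_summable: "\<And>N. (\<lambda>n. exp (- cenergy E n)) summable_on configs_of_size N"
    using assms(3) by (simp add: configs_of_size_def)
  note lam_pos = lam_pos[OF Zc_summable assms(4)]
    and lam_sums_one = lam_sums_one[OF Zc_summable assms(4)]
  have Fgc: "Fgc E \<mu> = \<mu> * real Nb - ln (Zgc E \<mu>)"
    by (rule Fgc_eq[OF Zc_summable assms(4,5)])
  have "lam E \<mu> Nb \<le> 1"
    using term_le_sums[OF _ lam_sums_one] lam_pos by (simp add: less_imp_le)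
  then have "ln (lam E \<mu> Nb) \<le> 0"
    using lam_pos[of Nb] by simp
  then have upper: "Fgc E \<mu> \<le> Fc E Nb"
    using ln_lam[OF Zc_summable assms(4), of Nb] Fgc by simp
  have "Fc E Nb \<le> Fgc E \<mu> + entropy E \<mu>"
    using convex_seq_le_expectation[OF Fc_increments_incseq[OF Zc_summable] _ lam_sums_one assms(5)
        lam_Fc_sums[OF Zc_summable assms(4,5)]] lam_pos Fgc
    by (simp add: less_imp_le)
  moreover have "entropy E \<mu> \<le> ln (1 + real Nb) + 1"
    using entropy_le_ln_mean(2)[OF lam_pos lam_sums_one assms(5)] by (simp add: entropy_def)
  ultimately show ?thesis
    using upper by linarith
qed

end
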